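(* A graph $G$ satisfies $\overline{\mu_\alpha}(G)\le 1$ if and only if $G$ is $\{\text{claw}, 2P_3\}$-free.
   Context: All graphs are finite, simple and undirected. For a graph $G$, $\alpha(G)$ is the maximum size of an independent set and $i(G)$ is the minimum size of a maximal (with respect to inclusion) independent set; the independence gap is $\mu_\alpha(G)=\alpha(G)-i(G)$. The hereditary independence gap is $\overline{\mu_\alpha}(G)=\max\{\mu_\alpha(H): H \text{ an induced subgraph of } G\}$. The claw is $K_{1,3}$; $P_3$ is the path on 3 vertices and $2P_3$ is the disjoint union of two copies of $P_3$. For a set $\mathcal F$ of graphs, $G$ is $\mathcal F$-free if no induced subgraph of $G$ is isomorphic to a member of $\mathcal F$. *)

theory Defs
  imports Main
begin

text \<open>A finite simple graph is given by a finite vertex set V and an edge relation E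
  which is symmetric and irreflexive on V. Induced subgraphs are given by subsets S of V
  (with E restricted to S).\<close>

definition simple_graph :: "'a set \<Rightarrow> ('a \<Rightarrow> 'a \<Rightarrow> bool) \<Rightarrow> bool" where
  "simple_graph V E \<longleftrightarrow> finite V \<and> (\<forall>x\<in>V. \<forall>y\<in>V. E x y \<longrightarrow> E y x) \<and> (\<forall>x\<in>V. \<not> E x x)"

definition independent_set :: "'a set \<Rightarrow> ('a \<Rightarrow> 'a \<Rightarrow> bool) \<Rightarrow> 'a set \<Rightarrow> bool" where
  "independent_set V E I \<longleftrightarrow> I \<subseteq> V \<and> (\<forall>x\<in>I. \<forall>y\<in>I. \<not> E x y)"

definition maximal_independent_set :: "'a set \<Rightarrow> ('a \<Rightarrow> 'a \<Rightarrow> bool) \<Rightarrow> 'a set \<Rightarrow> bool" where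
  "maximal_independent_set V E I \<longleftrightarrow> independent_set V E I \<and>
     (\<forall>J. independent_set V E J \<and> I \<subseteq> J \<longrightarrow> J = I)"

definition alpha :: "'a set \<Rightarrow> ('a \<Rightarrow> 'a \<Rightarrow> bool) \<Rightarrow> nat" where
  "alpha V E = Max (card ` {I. independent_set V E I})"

definition indep_domination :: "'a set \<Rightarrow> ('a \<Rightarrow> 'a \<Rightarrow> bool) \<Rightarrow> nat" where
  "indep_domination V E = Min (card ` {I. maximal_independent_set V E I})"

definition indep_gap :: "'a set \<Rightarrow> ('a \<Rightarrow> 'a \<Rightarrow> bool) \<Rightarrow> int" where
  "indep_gap V E = int (alpha V E) - int (indep_domination V E)"

definition hered_indep_gap :: "'a set \<Rightarrow> ('a \<Rightarrow> 'a \<Rightarrow> bool) \<Rightarrow> int" where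
  "hered_indep_gap V E = Max ((\<lambda>S. indep_gap S E) ` Pow V)"

definition has_induced :: "'a set \<Rightarrow> ('a \<Rightarrow> 'a \<Rightarrow> bool) \<Rightarrow> 'b set \<Rightarrow> ('b \<Rightarrow> 'b \<Rightarrow> bool) \<Rightarrow> bool" where
  "has_induced V E W F \<longleftrightarrow> (\<exists>f. inj_on f W \<and> f ` W \<subseteq> V \<and>
      (\<forall>x\<in>W. \<forall>y\<in>W. E (f x) (f y) \<longleftrightarrow> F x y))"

definition claw_V :: "nat set" where "claw_V = {0,1,2,3}"
definition claw_E :: "nat \<Rightarrow> nat \<Rightarrow> bool" where
  "claw_E x y \<longleftrightarrow> (x = 0 \<and> y \<in> {1,2,3}) \<or> (y = 0 \<and> x \<in> {1,2,3})"

definition twoP3_V :: "nat set" where "twoP3_V = {0,1,2,3,4,5}"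
definition twoP3_E :: "nat \<Rightarrow> nat \<Rightarrow> bool" where
  "twoP3_E x y \<longleftrightarrow> {x,y} \<in> {{0,1},{1,2},{3,4},{4,5}}"

end

theory Submission
  imports Defs
begin

text \<open>
  A claw shows \<open>\<alpha> = 3\<close> against \<open>i = 1\<close> and \<open>2P\<^sub>3\<close> shows \<open>\<alpha> = 4\<close> against \<open>i = 2\<close>, so both
  forbidden subgraphs are necessary. Conversely, let \<open>I\<close> be a maximal and \<open>J\<close> an arbitrary
  independent set. Every vertex of \<open>J - I\<close> has a neighbour in \<open>I - J\<close>; fix such a choice \<open>g\<close>.
  Without a claw no vertex of \<open>I - J\<close> is chosen three times, and two vertices each chosen twice
  would, again by claw-freeness, span an induced \<open>2P\<^sub>3\<close>. Hence \<open>g\<close> is injective up to one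
  point, which gives \<open>|J - I| \<le> |I - J| + 1\<close> and therefore \<open>|J| \<le> |I| + 1\<close>.
\<close>

lemma simple_graph_subset:
  "simple_graph V E \<Longrightarrow> S \<subseteq> V \<Longrightarrow> simple_graph S E"
  unfolding simple_graph_def by (meson finite_subset subsetD)

lemma independent_set_subset:
  "independent_set S E J \<Longrightarrow> K \<subseteq> J \<Longrightarrow> independent_set S E K"
  unfolding independent_set_def by blast

lemma has_inducedE:
  assumes "has_induced V E W F"
  obtains f where "inj_on f W" "f ` W \<subseteq> V"
    "\<And>x y. x \<in> W \<Longrightarrow> y \<in> W \<Longrightarrow> E (f x) (f y) \<longleftrightarrow> F x y"
  using assms that unfolding has_induced_def by auto

lemma has_induced_mono:
  assumes "S \<subseteq> V" "has_induced S E W F"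
  shows "has_induced V E W F"
  using assms(2) subset_trans[OF _ assms(1)] unfolding has_induced_def by metis

lemma finite_independent_sets: "finite S \<Longrightarrow> finite {I. independent_set S E I}"
  unfolding independent_set_def by (rule finite_subset[of _ "Pow S"]) auto

lemma finite_maximal_independent_sets: "finite S \<Longrightarrow> finite {I. maximal_independent_set S E I}"
  by (rule finite_subset[OF _ finite_independent_sets]) (auto simp: maximal_independent_set_def)

lemma card_le_alpha: "finite S \<Longrightarrow> independent_set S E I \<Longrightarrow> card I \<le> alpha S E"
  unfolding alpha_def by (rule Max_ge) (auto intro: finite_independent_sets)

lemma indep_domination_le_card:
  "finite S \<Longrightarrow> maximal_independent_set S E I \<Longrightarrow> indep_domination S E \<le> card I"
  unfolding indep_domination_def by (rule Min_le) (auto intro: finite_maximal_independent_sets)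

lemma alpha_attained:
  assumes "finite S"
  obtains J where "independent_set S E J" "card J = alpha S E"
proof -
  have "independent_set S E {}" by (simp add: independent_set_def)
  then have "alpha S E \<in> card ` {I. independent_set S E I}"
    unfolding alpha_def using assms by (intro Max_in finite_imageI finite_independent_sets) auto
  then show ?thesis using that by (metis (mono_tags) imageE mem_Collect_eq)
qed

lemma maximum_independent_set_is_maximal:
  assumes "finite S" "independent_set S E J" "card J = alpha S E"
  shows "maximal_independent_set S E J"
  unfolding maximal_independent_set_def
proof (intro conjI allI impI assms(2))
  fix K assume K: "independent_set S E K \<and> J \<subseteq> K"
  then have "finite K" using assms(1) by (meson independent_set_def finite_subset)
  moreover have "card K \<le> card J" using card_le_alpha[OF assms(1)] K assms(3) by simp
  ultimately show "K = J" using K card_seteq by blast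
qed

lemma indep_domination_attained:
  assumes "finite S"
  obtains I where "maximal_independent_set S E I" "card I = indep_domination S E"
proof -
  obtain J where "maximal_independent_set S E J"
    using alpha_attained[OF assms] maximum_independent_set_is_maximal[OF assms] by metis
  then have "indep_domination S E \<in> card ` {I. maximal_independent_set S E I}"
    unfolding indep_domination_def using assms
    by (intro Min_in finite_imageI finite_maximal_independent_sets) auto
  then show ?thesis using that by (metis (mono_tags) imageE mem_Collect_eq)
qed

lemma indep_gap_ge:
  "finite S \<Longrightarrow> independent_set S E J \<Longrightarrow> maximal_independent_set S E I \<Longrightarrow>
     int (card J) - int (card I) \<le> indep_gap S E"
  unfolding indep_gap_def using card_le_alpha indep_domination_le_card by fastforce

lemma hered_indep_gap_le_iff:
  "finite V \<Longrightarrow> hered_indep_gap V E \<le> k \<longleftrightarrow> (\<forall>S\<subseteq>V. indep_gap S E \<le> k)"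
  unfolding hered_indep_gap_def by (subst Max_le_iff) auto

lemma maximal_independent_setI:
  assumes "independent_set S E I" "\<And>z. z \<in> S \<Longrightarrow> z \<notin> I \<Longrightarrow> \<exists>u\<in>I. E u z"
  shows "maximal_independent_set S E I"
  using assms unfolding maximal_independent_set_def independent_set_def by blast

lemma maximal_independent_set_dominates:
  assumes "simple_graph S E" "maximal_independent_set S E I" "w \<in> S" "w \<notin> I"
  shows "\<exists>u\<in>I. E w u"
proof -
  have I: "I \<subseteq> S" "\<forall>x\<in>I. \<forall>y\<in>I. \<not> E x y"
    using assms(2) unfolding maximal_independent_set_def independent_set_def by auto
  have "\<not> independent_set S E (insert w I)"
    using assms(2,4) unfolding maximal_independent_set_def by blast
  then obtain x y where "x \<in> insert w I" "y \<in> insert w I" "E x y"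
    using I assms(3) unfolding independent_set_def by blast
  moreover have "\<not> E w w" "\<And>u. u \<in> I \<Longrightarrow> E u w \<Longrightarrow> E w u"
    using assms(1,3) I(1) unfolding simple_graph_def by auto
  ultimately show ?thesis using I(2) by blast
qed

subsection \<open>The forbidden subgraphs have independence gap two\<close>

lemma indep_gap_ge_2_if_has_induced_claw:
  assumes "has_induced V E claw_V claw_E"
  shows "\<exists>S\<subseteq>V. indep_gap S E \<ge> 2"
proof -
  obtain f where f: "inj_on f claw_V" "f ` claw_V \<subseteq> V"
    and E_f: "\<And>x y. x \<in> claw_V \<Longrightarrow> y \<in> claw_V \<Longrightarrow> E (f x) (f y) \<longleftrightarrow> claw_E x y"
    using assms by (rule has_inducedE) blast
  let ?S = "f ` claw_V"
  have leaves: "independent_set ?S E {f 1, f 2, f 3}"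
    unfolding independent_set_def by (simp add: E_f claw_V_def claw_E_def)
  have centre: "maximal_independent_set ?S E {f 0}"
  proof (rule maximal_independent_setI)
    show "independent_set ?S E {f 0}"
      unfolding independent_set_def by (simp add: E_f claw_V_def claw_E_def)
    fix z assume "z \<in> ?S" "z \<notin> {f 0}"
    then obtain n where "n \<in> {1, 2, 3}" "z = f n" by (auto simp: claw_V_def)
    then show "\<exists>u\<in>{f 0}. E u z" by (auto simp: E_f claw_V_def claw_E_def)
  qed
  have "card {f 1, f 2, f 3} = 3"
    using inj_on_eq_iff[OF f(1)] by (simp add: claw_V_def)
  moreover have "finite ?S" by (simp add: claw_V_def)
  ultimately have "indep_gap ?S E \<ge> 2"
    using indep_gap_ge[OF _ leaves centre] by simp
  with f(2) show ?thesis by blast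
qed

lemma indep_gap_ge_2_if_has_induced_twoP3:
  assumes "has_induced V E twoP3_V twoP3_E"
  shows "\<exists>S\<subseteq>V. indep_gap S E \<ge> 2"
proof -
  obtain f where f: "inj_on f twoP3_V" "f ` twoP3_V \<subseteq> V"
    and E_f: "\<And>x y. x \<in> twoP3_V \<Longrightarrow> y \<in> twoP3_V \<Longrightarrow> E (f x) (f y) \<longleftrightarrow> twoP3_E x y"
    using assms by (rule has_inducedE) blast
  let ?S = "f ` twoP3_V"
  have ends: "independent_set ?S E {f 0, f 2, f 3, f 5}"
    unfolding independent_set_def by (simp add: E_f twoP3_V_def twoP3_E_def doubleton_eq_iff)
  have middles: "maximal_independent_set ?S E {f 1, f 4}"
  proof (rule maximal_independent_setI)
    show "independent_set ?S E {f 1, f 4}"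
      unfolding independent_set_def by (simp add: E_f twoP3_V_def twoP3_E_def doubleton_eq_iff)
    fix z assume "z \<in> ?S" "z \<notin> {f 1, f 4}"
    then obtain n where "n \<in> {0, 2, 3, 5}" "z = f n" by (auto simp: twoP3_V_def)
    then show "\<exists>u\<in>{f 1, f 4}. E u z"
      by (auto simp: E_f twoP3_V_def twoP3_E_def doubleton_eq_iff)
  qed
  have "card {f 0, f 2, f 3, f 5} = 4" "card {f 1, f 4} = 2"
    using inj_on_eq_iff[OF f(1)] by (simp_all add: twoP3_V_def)
  moreover have "finite ?S" by (simp add: twoP3_V_def)
  ultimately have "indep_gap ?S E \<ge> 2"
    using indep_gap_ge[OF _ ends middles] by simp
  with f(2) show ?thesis by blast
qed

subsection \<open>Claw-free and \<open>2P\<^sub>3\<close>-free graphs have independence gap at most one\<close>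

lemma has_induced_clawI:
  assumes sg: "simple_graph S E" and "u \<in> S" "a \<in> S" "b \<in> S" "c \<in> S"
    and "E u a" "E u b" "E u c" "a \<noteq> b" "a \<noteq> c" "b \<noteq> c" "\<not> E a b" "\<not> E a c" "\<not> E b c"
  shows "has_induced S E claw_V claw_E"
proof -
  have sym: "\<And>x y. x \<in> S \<Longrightarrow> y \<in> S \<Longrightarrow> E x y \<Longrightarrow> E y x"
    and irr: "\<And>x. x \<in> S \<Longrightarrow> \<not> E x x"
    using sg unfolding simple_graph_def by blast+
  have E': "E a u" "E b u" "E c u" "\<not> E b a" "\<not> E c a" "\<not> E c b"
    "\<not> E u u" "\<not> E a a" "\<not> E b b" "\<not> E c c"
    using assms sym irr by blast+
  then have "u \<noteq> a" "u \<noteq> b" "u \<noteq> c" using assms by metis+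
  then show ?thesis unfolding has_induced_def claw_V_def claw_E_def
    using assms E' by (intro exI[of _ "\<lambda>n. [u, a, b, c] ! n"]) (auto simp: eval_nat_numeral)
qed

lemma has_induced_twoP3I:
  assumes sg: "simple_graph S E" and "u \<in> S" "a \<in> S" "b \<in> S" "v \<in> S" "c \<in> S" "d \<in> S"
    and "E u a" "E u b" "E v c" "E v d"
    and "a \<noteq> b" "a \<noteq> c" "a \<noteq> d" "b \<noteq> c" "b \<noteq> d" "c \<noteq> d" "u \<noteq> v"
      "u \<noteq> c" "u \<noteq> d" "v \<noteq> a" "v \<noteq> b"
    and "\<not> E a b" "\<not> E a c" "\<not> E a d" "\<not> E b c" "\<not> E b d" "\<not> E c d" "\<not> E u v"
      "\<not> E u c" "\<not> E u d" "\<not> E v a" "\<not> E v b"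
  shows "has_induced S E twoP3_V twoP3_E"
proof -
  have sym: "\<And>x y. x \<in> S \<Longrightarrow> y \<in> S \<Longrightarrow> E x y \<Longrightarrow> E y x"
    and irr: "\<And>x. x \<in> S \<Longrightarrow> \<not> E x x"
    using sg unfolding simple_graph_def by blast+
  have E': "E a u" "E b u" "E c v" "E d v"
    "\<not> E b a" "\<not> E c a" "\<not> E d a" "\<not> E c b" "\<not> E d b" "\<not> E d c"
    "\<not> E v u" "\<not> E c u" "\<not> E d u" "\<not> E a v" "\<not> E b v"
    "\<not> E u u" "\<not> E a a" "\<not> E b b" "\<not> E c c" "\<not> E v v" "\<not> E d d"
    using assms sym irr by blast+
  then have "u \<noteq> a" "u \<noteq> b" "v \<noteq> c" "v \<noteq> d" using assms by metis+
  then show ?thesis unfolding has_induced_def twoP3_V_def twoP3_E_def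
    using assms E' by (intro exI[of _ "\<lambda>n. [a, u, b, c, v, d] ! n"])
      (auto simp: eval_nat_numeral doubleton_eq_iff insert_commute)
qed

lemma claw_free_no_three_independent_neighbours:
  assumes "simple_graph S E" "\<not> has_induced S E claw_V claw_E" "independent_set S E J"
    and "u \<in> S" "x \<in> J" "y \<in> J" "z \<in> J" "x \<noteq> y" "x \<noteq> z" "y \<noteq> z" "E u x" "E u y" "E u z"
  shows False
  using has_induced_clawI[OF assms(1), of u x y z] assms unfolding independent_set_def by blast

text \<open>
  A second collision either lands on \<open>g a\<close>, giving a claw, or elsewhere, in which case the two
  collisions span an induced \<open>2P\<^sub>3\<close>.
\<close>

lemma neighbour_choice_inj_on_Diff_collision:
  assumes sg: "simple_graph S E"
    and claw_free: "\<not> has_induced S E claw_V claw_E"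
    and twoP3_free: "\<not> has_induced S E twoP3_V twoP3_E"
    and A: "independent_set S E A" and B: "independent_set S E B" and AB: "A \<inter> B = {}"
    and g: "\<And>w. w \<in> A \<Longrightarrow> g w \<in> B \<and> E w (g w)"
    and ab: "a \<in> A" "b \<in> A" "a \<noteq> b" "g a = g b"
  shows "inj_on g (A - {a})"
proof (rule inj_onI, rule ccontr)
  fix x y assume x: "x \<in> A - {a}" and y: "y \<in> A - {a}" and gxy: "g x = g y" and "x \<noteq> y"
  have AS: "A \<subseteq> S" and BS: "B \<subseteq> S" and Aind: "\<And>p q. p \<in> A \<Longrightarrow> q \<in> A \<Longrightarrow> \<not> E p q"
    and Bind: "\<And>p q. p \<in> B \<Longrightarrow> q \<in> B \<Longrightarrow> \<not> E p q"
    using A B unfolding independent_set_def by blast+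
  have gB: "\<And>w. w \<in> A \<Longrightarrow> g w \<in> B" and gA: "\<And>w. w \<in> A \<Longrightarrow> g w \<notin> A"
    using g AB by blast+
  have E_g: "E (g w) w" if "w \<in> A" for w
    using sg g[OF that] AS BS that unfolding simple_graph_def by blast
  have no_three: False
    if "w \<in> A" "p \<in> A" "q \<in> A" "r \<in> A" "p \<noteq> q" "p \<noteq> r" "q \<noteq> r"
      "E (g w) p" "E (g w) q" "E (g w) r" for w p q r
    using claw_free_no_three_independent_neighbours[OF sg claw_free A, of "g w" p q r]
      gB[OF that(1)] BS that by blast
  define u v where "u = g a" and "v = g x"
  have "u \<noteq> v" \<comment> \<open>otherwise \<open>a\<close>, \<open>x\<close> and \<open>y\<close> are three neighbours of \<open>u\<close>\<close>
    using no_three[of a a x y] E_g[of a] E_g[of x] E_g[of y] ab x y gxy \<open>x \<noteq> y\<close>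
    unfolding u_def v_def by auto
  then have "x \<noteq> b" "y \<noteq> b" using ab gxy unfolding u_def v_def by auto
  have "\<not> E u x" "\<not> E u y"
    using no_three[of a a b x] no_three[of a a b y] E_g[of a] E_g[of b] ab x y
      \<open>x \<noteq> b\<close> \<open>y \<noteq> b\<close> unfolding u_def by auto
  moreover have "\<not> E v a" "\<not> E v b"
    using no_three[of x x y a] no_three[of x x y b] E_g[of x] E_g[of y] ab x y gxy
      \<open>x \<noteq> y\<close> \<open>x \<noteq> b\<close> \<open>y \<noteq> b\<close> unfolding v_def by auto
  moreover have "E u a" "E u b" "E v x" "E v y"
    using E_g[of a] E_g[of b] E_g[of x] E_g[of y] ab x y gxy unfolding u_def v_def by auto
  moreover have "u \<in> B" "v \<in> B" "u \<notin> A" "v \<notin> A"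
    using gB gA ab x unfolding u_def v_def by auto
  ultimately have "has_induced S E twoP3_V twoP3_E"
    using ab(1-3) x y \<open>x \<noteq> y\<close> \<open>x \<noteq> b\<close> \<open>y \<noteq> b\<close> \<open>u \<noteq> v\<close>
      Aind[of a b] Aind[of a x] Aind[of a y] Aind[of b x] Aind[of b y] Aind[of x y]
      Bind[of u v] AS BS
    by (intro has_induced_twoP3I[OF sg, of u a b v x y]) auto
  with twoP3_free show False ..
qed

lemma card_le_Suc_card_if_inj_on_Diff_singleton:
  assumes "finite B" "g ` A \<subseteq> B" "inj_on g (A - {a})"
  shows "card A \<le> Suc (card B)"
proof -
  have "card (A - {a}) \<le> card B"
    using card_inj_on_le[OF assms(3) _ assms(1)] assms(2) by blast
  then show ?thesis by (cases "a \<in> A") (auto simp: card_Diff_singleton_if)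
qed

lemma maximal_independent_set_neighbour_choice:
  assumes sg: "simple_graph S E"
    and I: "maximal_independent_set S E I" and J: "independent_set S E J"
  shows "\<exists>g. \<forall>w\<in>J - I. g w \<in> I - J \<and> E w (g w)"
proof (rule bchoice, rule ballI)
  fix w assume w: "w \<in> J - I"
  with J obtain u where "u \<in> I" "E w u"
    using maximal_independent_set_dominates[OF sg I, of w] unfolding independent_set_def by blast
  moreover have "u \<notin> J" using J w \<open>E w u\<close> unfolding independent_set_def by blast
  ultimately show "\<exists>u. u \<in> I - J \<and> E w u" by blast
qed

lemma card_independent_le_Suc_card_maximal:
  assumes sg: "simple_graph S E"
    and claw_free: "\<not> has_induced S E claw_V claw_E"
    and twoP3_free: "\<not> has_induced S E twoP3_V twoP3_E"
    and I: "maximal_independent_set S E I" and J: "independent_set S E J"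
  shows "card J \<le> Suc (card I)"
proof -
  have I': "independent_set S E I" using I unfolding maximal_independent_set_def by blast
  have "I \<subseteq> S" "J \<subseteq> S" using I' J unfolding independent_set_def by blast+
  moreover have "finite S" using sg unfolding simple_graph_def by blast
  ultimately have "finite I" "finite J" by (auto intro: finite_subset)
  obtain g where "\<forall>w\<in>J - I. g w \<in> I - J \<and> E w (g w)"
    using maximal_independent_set_neighbour_choice[OF sg I J] by blast
  then have g: "\<And>w. w \<in> J - I \<Longrightarrow> g w \<in> I - J \<and> E w (g w)" by blast
  have "\<exists>a. inj_on g (J - I - {a})"
  proof (cases "inj_on g (J - I)")
    case True
    then show ?thesis using inj_on_diff by blast
  next
    case False
    then obtain a b where ab: "a \<in> J - I" "b \<in> J - I" "a \<noteq> b" "g a = g b"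
      unfolding inj_on_def by blast
    have "independent_set S E (J - I)" "independent_set S E (I - J)"
      using independent_set_subset[OF J, of "J - I"] independent_set_subset[OF I', of "I - J"]
      by blast+
    from neighbour_choice_inj_on_Diff_collision[OF sg claw_free twoP3_free this _ g ab]
    show ?thesis by blast
  qed
  then obtain a where "inj_on g (J - I - {a})" ..
  then have "card (J - I) \<le> Suc (card (I - J))"
    using g \<open>finite I\<close> by (intro card_le_Suc_card_if_inj_on_Diff_singleton) auto
  moreover have "card J = card (I \<inter> J) + card (J - I)"
    using card_Int_Diff[OF \<open>finite J\<close>, of I] by (simp add: Int_commute)
  moreover have "card I = card (I \<inter> J) + card (I - J)"
    using card_Int_Diff[OF \<open>finite I\<close>, of J] .
  ultimately show ?thesis by linarith
qed

lemma indep_gap_le_1_if_claw_free_twoP3_free: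
  assumes "simple_graph S E"
    and "\<not> has_induced S E claw_V claw_E" "\<not> has_induced S E twoP3_V twoP3_E"
  shows "indep_gap S E \<le> 1"
proof -
  have "finite S" using assms(1) unfolding simple_graph_def by blast
  obtain J where "independent_set S E J" "card J = alpha S E"
    using alpha_attained[OF \<open>finite S\<close>] .
  moreover obtain I where "maximal_independent_set S E I" "card I = indep_domination S E"
    using indep_domination_attained[OF \<open>finite S\<close>] .
  ultimately show ?thesis
    using card_independent_le_Suc_card_maximal[OF assms] unfolding indep_gap_def by force
qed

theorem mainTheorem10:
  fixes V :: "'a set" and E :: "'a \<Rightarrow> 'a \<Rightarrow> bool"
  assumes "simple_graph V E"
  shows "hered_indep_gap V E \<le> 1 \<longleftrightarrow>
           \<not> has_induced V E claw_V claw_E \<and> \<not> has_induced V E twoP3_V twoP3_E"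
proof -
  have "finite V" using assms unfolding simple_graph_def by blast
  then have "hered_indep_gap V E \<le> 1 \<longleftrightarrow> (\<forall>S\<subseteq>V. indep_gap S E \<le> 1)"
    by (rule hered_indep_gap_le_iff)
  also have "\<dots> \<longleftrightarrow> \<not> has_induced V E claw_V claw_E \<and> \<not> has_induced V E twoP3_V twoP3_E"
  proof (intro iffI conjI notI allI impI)
    assume gap: "\<forall>S\<subseteq>V. indep_gap S E \<le> 1"
    show False if "has_induced V E claw_V claw_E"
    proof -
      from indep_gap_ge_2_if_has_induced_claw[OF that]
      obtain S where "S \<subseteq> V" "indep_gap S E \<ge> 2" by blast
      with gap[rule_format, OF \<open>S \<subseteq> V\<close>] show False by linarith
    qed
    show False if "has_induced V E twoP3_V twoP3_E"
    proof -
      from indep_gap_ge_2_if_has_induced_twoP3[OF that]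
      obtain S where "S \<subseteq> V" "indep_gap S E \<ge> 2" by blast
      with gap[rule_format, OF \<open>S \<subseteq> V\<close>] show False by linarith
    qed
  next
    fix S assume "S \<subseteq> V"
      and "\<not> has_induced V E claw_V claw_E \<and> \<not> has_induced V E twoP3_V twoP3_E"
    then show "indep_gap S E \<le> 1"
      using has_induced_mono[OF \<open>S \<subseteq> V\<close>]
      by (intro indep_gap_le_1_if_claw_free_twoP3_free simple_graph_subset[OF assms]) blast+
  qed
  finally show ?thesis .
qed

end
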